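(* Let $\chi,a,b,\lambda,\mu$ be positive constants with $b>2\chi\mu$. Let $u_0$ be a bounded, uniformly continuous function on $\mathbb{R}$ with $u_0>0$ on $\mathbb{R}$, $\liminf_{x\to-\infty}u_0(x)>0$, $u_0(x)\to0$ as $x\to+\infty$, and such that for some $\xi_0$, $u_0\in C^2([\xi_0,+\infty))$, $u_0'\le0$ on $[\xi_0,+\infty)$ and $u_0''(x)/u_0(x)\to0$ as $x\to+\infty$. Let $(u,v)$ be the nonnegative classical solution of \[ u_t=u_{xx}-\chi(uv_x)_x+u(a-bu),\quad 0=v_{xx}-\lambda v+\mu u,\quad x\in\mathbb{R},\ t>0,\qquad u(x,0)=u_0(x), \] and let $E_\omega(t)=\{x\in\mathbb{R}:u(x,t)=\omega\}$. For any $\epsilon>0$ and $\gamma_1>0$, if $\zeta(t)$ satisfies $u_0(\zeta(t))=\gamma_1e^{-(a+\epsilon)t}$ for all sufficiently large $t$, then for any $\omega\in(0,a/b)$ there is $T_1\ge0$ such that $E_\omega(t)\subseteq(-\infty,\zeta(t)]$ for all $t\ge T_1$.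
   Context: The solution is the unique nonnegative classical solution with $u\in C([0,\infty),C^b_{\rm unif}(\mathbb{R}))\cap C^1((0,\infty),C^b_{\rm unif}(\mathbb{R}))$ (global and bounded in time since $b>\chi\mu$), where $C^b_{\rm unif}(\mathbb{R})$ is the space of bounded uniformly continuous functions with the sup norm. *)

theory Defs
  imports "HOL-Analysis.Analysis"
begin

text \<open>Nonnegative classical solution (u,v) of
  u_t = u_xx - chi (u v_x)_x + u (a - b u),  0 = v_xx - lam v + mu u,  x in R, t > 0,
  u(x,0) = u0(x), with u in C([0,inf), C^b_unif(R)) and C^1((0,inf), C^b_unif(R)).
  Functions are written u x t.  The space of bounded continuous functions with
  the sup norm is the library type bcontfun; uniform continuity is imposed
  separately.  v(.,t) is required to be bounded (the elliptic equation is read as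
  v = mu (lam - Delta)^(-1) u).\<close>

definition classical_solution ::
  "real \<Rightarrow> real \<Rightarrow> real \<Rightarrow> real \<Rightarrow> real \<Rightarrow> (real \<Rightarrow> real)
   \<Rightarrow> (real \<Rightarrow> real \<Rightarrow> real) \<Rightarrow> (real \<Rightarrow> real \<Rightarrow> real) \<Rightarrow> bool" where
  "classical_solution chi a b lam mu u0 u v \<longleftrightarrow>
     (\<exists>U U' :: real \<Rightarrow> (real \<Rightarrow>\<^sub>C real).
        (\<forall>t\<ge>0. \<forall>x. u x t = apply_bcontfun (U t) x)
      \<and> (\<forall>t\<ge>0. uniformly_continuous_on UNIV (apply_bcontfun (U t)))
      \<and> continuous_on {0..} U
      \<and> (\<forall>t>0. (U has_vector_derivative U' t) (at t))
      \<and> (\<forall>t>0. uniformly_continuous_on UNIV (apply_bcontfun (U' t)))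
      \<and> continuous_on {0<..} U')
   \<and> (\<forall>x. u x 0 = u0 x)
   \<and> (\<forall>x. \<forall>t\<ge>0. u x t \<ge> 0)
   \<and> (\<forall>t>0. \<forall>x. v x t \<ge> 0)
   \<and> (\<forall>t>0. bounded (range (\<lambda>x. v x t)))
   \<and> (\<forall>t>0. \<forall>x.
        (\<lambda>y. u y t) differentiable (at x)
      \<and> deriv (\<lambda>y. u y t) differentiable (at x)
      \<and> (\<lambda>y. v y t) differentiable (at x)
      \<and> deriv (\<lambda>y. v y t) differentiable (at x)
      \<and> (\<lambda>y. u y t * deriv (\<lambda>z. v z t) y) differentiable (at x)
      \<and> ((\<lambda>s. u x s) has_real_derivative
            (deriv (deriv (\<lambda>y. u y t)) x
             - chi * deriv (\<lambda>y. u y t * deriv (\<lambda>z. v z t) y) x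
             + u x t * (a - b * u x t))) (at t)
      \<and> 0 = deriv (deriv (\<lambda>y. v y t)) x - lam * v x t + mu * u x t)"

end

theory Submission
  imports Defs "HOL-Real_Asymp.Real_Asymp"
begin

text \<open>When \<open>b > \<chi> \<mu>\<close> the logistic term dominates aggregation: comparison with the constant
  \<open>max (sup u\<^sub>0) (a / (b - \<chi> \<mu>))\<close> bounds \<open>u\<close>, the elliptic equation then bounds \<open>v\<^sub>x\<close>, and
  \<open>u\<^sub>t \<le> u\<^sub>x\<^sub>x - \<chi> v\<^sub>x u\<^sub>x + a u\<close> with a bounded drift \<open>\<chi> v\<^sub>x\<close>.
  Because \<open>u\<^sub>0\<close> decreases and \<open>u\<^sub>0'' / u\<^sub>0 \<rightarrow> 0\<close>, also \<open>u\<^sub>0' / u\<^sub>0 \<rightarrow> 0\<close>, so on a half-line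
  \<open>[X, \<infinity>)\<close> the profile \<open>C e\<^bsup>(a + \<epsilon>/2) t\<^esup> u\<^sub>0(x)\<close> is a supersolution of this linear equation
  and the maximum principle bounds \<open>u\<close> by it. To the right of \<open>\<zeta>(t)\<close> this bound is at most
  \<open>C \<gamma>\<^sub>1 e\<^bsup>-\<epsilon> t/2\<^esup> < \<omega>\<close> for large \<open>t\<close>, while \<open>u\<^sub>0\<close> is bounded below left of \<open>X\<close>, which
  forces \<open>\<zeta>(t) > X\<close> eventually.\<close>

lemma second_derivative_test_max:
  fixes f f' :: "real \<Rightarrow> real"
  assumes d: "0 < d"
    and f': "\<And>y. \<bar>y - x\<bar> < d \<Longrightarrow> (f has_real_derivative f' y) (at y)"
    and f'': "(f' has_real_derivative f'') (at x)"
    and max: "\<And>y. \<bar>y - x\<bar> < d \<Longrightarrow> f y \<le> f x"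
  shows "f' x = 0" and "f'' \<le> 0"
proof -
  show f'0: "f' x = 0"
    using d max by (intro DERIV_local_max[OF f'[of x] d]) (auto simp: abs_minus_commute)
  show "f'' \<le> 0"
  proof (rule ccontr)
    assume "\<not> f'' \<le> 0"
    from DERIV_pos_inc_right[OF f''] this obtain e where e: "0 < e"
      "\<And>h. 0 < h \<Longrightarrow> h < e \<Longrightarrow> f' x < f' (x + h)" by force
    define h where "h = min d e / 2"
    have h: "0 < h" "h < d" "h < e" using d e by (auto simp: h_def)
    obtain z where z: "x < z" "z < x + h" "f (x + h) - f x = (x + h - x) * f' z"
      using MVT2[of x "x + h" f f'] h f' by force
    have "f' x < f' (x + (z - x))" using z h by (intro e) auto
    then have "f x < f (x + h)" using z h f'0 by (simp add: algebra_simps)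
    moreover have "f (x + h) \<le> f x" using h by (intro max) auto
    ultimately show False by simp
  qed
qed

lemma DERIV_nonneg_at_left_max:
  fixes f :: "real \<Rightarrow> real"
  assumes f': "(f has_real_derivative D) (at t)" and d: "0 < d"
    and max: "\<And>s. t - d < s \<Longrightarrow> s < t \<Longrightarrow> f s \<le> f t"
  shows "0 \<le> D"
proof (rule ccontr)
  assume "\<not> 0 \<le> D"
  from DERIV_neg_dec_left[OF f'] this obtain e where e: "0 < e"
    "\<And>h. 0 < h \<Longrightarrow> h < e \<Longrightarrow> f t < f (t - h)" by force
  define h where "h = min d e / 2"
  have "0 < h" "h < d" "h < e" using d e by (auto simp: h_def)
  then have "f t < f (t - h)" and "f (t - h) \<le> f t" by (auto intro: e max)
  then show False by simp
qed

lemma continuous_attains_sup_if_neg_outside_bounded: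
  fixes f :: "'a::heine_borel \<Rightarrow> real"
  assumes S: "closed S" and f: "continuous_on S f" and B: "bounded B"
    and neg: "\<And>x. x \<in> S \<Longrightarrow> x \<notin> B \<Longrightarrow> f x < 0"
    and x0: "x0 \<in> S" "0 < f x0"
  obtains xm where "xm \<in> S" "\<And>x. x \<in> S \<Longrightarrow> f x \<le> f xm"
proof -
  define K where "K = S \<inter> closure B"
  have "x0 \<in> B" using neg x0 by force
  then have x0K: "x0 \<in> K" using x0 closure_subset by (auto simp: K_def)
  have "compact K"
    unfolding K_def using S B by (intro closed_Int_compact compact_closure[THEN iffD2])
  moreover have "continuous_on K f" using f by (rule continuous_on_subset) (auto simp: K_def)
  ultimately obtain xm where xm: "xm \<in> K" "\<And>x. x \<in> K \<Longrightarrow> f x \<le> f xm"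
    using continuous_attains_sup[of K f] x0K by blast
  have "f x \<le> f xm" if "x \<in> S" for x
  proof (cases "x \<in> B")
    case True
    then show ?thesis using that closure_subset by (intro xm) (auto simp: K_def)
  next
    case False
    then show ?thesis using neg[OF that] x0 xm(2)[OF x0K] by linarith
  qed
  then show thesis using xm(1) by (intro that) (auto simp: K_def)
qed

text \<open>The weight \<open>1 + x\<^sup>2\<close> lets a maximum exist on unbounded domains, and the growth rate
  \<open>K + 3\<close> beats the drift term because \<open>2 \<bar>x\<bar> \<le> 1 + x\<^sup>2\<close>.\<close>

lemma penalized_max_violates_subsolution:
  fixes z zx zxx zt :: "real \<Rightarrow> real \<Rightarrow> real" and \<delta> K :: real
  defines "\<phi> \<equiv> \<lambda>x t. z x t - \<delta> * exp ((K + 3) * t) * (1 + x\<^sup>2)"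
  assumes \<delta>: "0 < \<delta>" and d: "0 < d" and t: "0 < t"
    and zx: "\<And>y. \<bar>y - x\<bar> < d \<Longrightarrow> ((\<lambda>y. z y t) has_real_derivative zx y t) (at y)"
    and zxx: "((\<lambda>y. zx y t) has_real_derivative zxx x t) (at x)"
    and zt: "((\<lambda>s. z x s) has_real_derivative zt x t) (at t)"
    and space_max: "\<And>y. \<bar>y - x\<bar> < d \<Longrightarrow> \<phi> y t \<le> \<phi> x t"
    and time_max: "\<And>s. 0 \<le> s \<Longrightarrow> s < t \<Longrightarrow> \<phi> x s \<le> \<phi> x t"
    and \<beta>: "\<bar>\<beta>\<bar> \<le> K"
    and subsol: "zt x t \<le> zxx x t - \<beta> * zx x t"
  shows False
proof -
  define E where "E = \<delta> * exp ((K + 3) * t)"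
  have E: "0 < E" using \<delta> by (simp add: E_def)
  have "((\<lambda>y. \<phi> y t) has_real_derivative zx y t - 2 * E * y) (at y)" if "\<bar>y - x\<bar> < d" for y
    using zx[OF that] unfolding \<phi>_def E_def by (auto intro!: derivative_eq_intros)
  moreover have "((\<lambda>y. zx y t - 2 * E * y) has_real_derivative zxx x t - 2 * E) (at x)"
    using zxx by (auto intro!: derivative_eq_intros)
  ultimately have "zx x t - 2 * E * x = 0" and zxx_le: "zxx x t - 2 * E \<le> 0"
    using second_derivative_test_max[OF d, of x "\<lambda>y. \<phi> y t" "\<lambda>y. zx y t - 2 * E * y"
        "zxx x t - 2 * E"] space_max
    by auto
  then have zx_eq: "zx x t = 2 * E * x" by simp
  have "0 \<le> zt x t - E * (K + 3) * (1 + x\<^sup>2)"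
  proof (rule DERIV_nonneg_at_left_max[OF _ t, of "\<lambda>s. \<phi> x s"])
    show "((\<lambda>s. \<phi> x s) has_real_derivative zt x t - E * (K + 3) * (1 + x\<^sup>2)) (at t)"
      using zt unfolding \<phi>_def E_def by (auto intro!: derivative_eq_intros simp: algebra_simps)
  qed (use time_max in auto)
  moreover have "- \<beta> * zx x t \<le> E * K * (1 + x\<^sup>2)"
  proof -
    have "- \<beta> * zx x t \<le> \<bar>\<beta>\<bar> * (2 * E * \<bar>x\<bar>)"
      using abs_ge_minus_self[of "\<beta> * zx x t"] E by (simp add: zx_eq abs_mult)
    also have "\<dots> \<le> K * (2 * E * \<bar>x\<bar>)" using \<beta> E by (intro mult_right_mono) auto
    also have "\<dots> \<le> K * (E * (1 + x\<^sup>2))"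
    proof -
      have "2 * \<bar>x\<bar> \<le> 1 + x\<^sup>2" using zero_le_power2[of "\<bar>x\<bar> - 1"] by (simp add: power2_diff)
      then show ?thesis using \<beta> E abs_ge_zero[of \<beta>] by (intro mult_left_mono) auto
    qed
    finally show ?thesis by (simp add: algebra_simps)
  qed
  ultimately have "E * (3 * (1 + x\<^sup>2)) \<le> E * 2"
    using subsol zxx_le by (simp add: algebra_simps)
  moreover have "E * 3 \<le> E * (3 * (1 + x\<^sup>2))" using E by (intro mult_left_mono) auto
  ultimately show False using E by linarith
qed

locale parabolic_subsolution =
  fixes D :: "real set" and T M K :: real and z zx zxx zt \<beta> :: "real \<Rightarrow> real \<Rightarrow> real"
  assumes closed_domain: "closed D"
    and continuous: "continuous_on (D \<times> {0..T}) (\<lambda>p. z (fst p) (snd p))"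
    and bounded_above: "\<And>x t. x \<in> D \<Longrightarrow> t \<in> {0..T} \<Longrightarrow> z x t \<le> M"
    and initial: "\<And>x. x \<in> D \<Longrightarrow> z x 0 \<le> 0"
    and boundary: "\<And>x t. x \<in> D \<Longrightarrow> x \<notin> interior D \<Longrightarrow> t \<in> {0..T} \<Longrightarrow> z x t \<le> 0"
    and derivatives: "\<And>x t. x \<in> interior D \<Longrightarrow> t \<in> {0<..T} \<Longrightarrow>
        ((\<lambda>y. z y t) has_real_derivative zx x t) (at x) \<and>
        ((\<lambda>y. zx y t) has_real_derivative zxx x t) (at x) \<and>
        ((\<lambda>s. z x s) has_real_derivative zt x t) (at t)"
    and drift_bounded: "\<And>x t. x \<in> interior D \<Longrightarrow> t \<in> {0<..T} \<Longrightarrow> \<bar>\<beta> x t\<bar> \<le> K"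
    and drift_bound_nonneg: "0 \<le> K"
    and subsolution: "\<And>x t. x \<in> interior D \<Longrightarrow> t \<in> {0<..T} \<Longrightarrow> 0 < z x t \<Longrightarrow>
        zt x t \<le> zxx x t - \<beta> x t * zx x t"
begin

lemma penalty_dominates_far:
  assumes \<delta>: "0 < \<delta>" and y: "y \<in> D" "\<bar>M\<bar> / \<delta> + 1 \<le> \<bar>y\<bar>" and s: "s \<in> {0..T}"
  shows "z y s < \<delta> * exp ((K + 3) * s) * (1 + y\<^sup>2)"
proof -
  have "1 \<le> \<bar>M\<bar> / \<delta> + 1" using \<delta> by simp
  then have "(\<bar>M\<bar> / \<delta> + 1) * 1 \<le> \<bar>y\<bar> * \<bar>y\<bar>" using y(2) by (intro mult_mono) auto
  then have "\<bar>M\<bar> / \<delta> + 1 \<le> y\<^sup>2" by (simp add: power2_eq_square)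
  then have "\<bar>M\<bar> + \<delta> \<le> \<delta> * (1 + y\<^sup>2) - \<delta>" using \<delta> by (simp add: field_simps)
  moreover have "\<delta> * (1 + y\<^sup>2) \<le> \<delta> * exp ((K + 3) * s) * (1 + y\<^sup>2)"
    using \<delta> drift_bound_nonneg s by (intro mult_right_mono) auto
  ultimately show ?thesis using bounded_above[OF y(1) s] abs_ge_self[of M] \<delta> by linarith
qed

lemma penalized_le:
  assumes \<delta>: "0 < \<delta>" and x: "x \<in> D" and t: "t \<in> {0..T}"
  shows "z x t \<le> \<delta> * exp ((K + 3) * t) * (1 + x\<^sup>2)"
proof (rule ccontr)
  define \<phi> where "\<phi> x t = z x t - \<delta> * exp ((K + 3) * t) * (1 + x\<^sup>2)" for x t
  assume "\<not> ?thesis"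
  then have pos: "0 < \<phi> x t" by (simp add: \<phi>_def)
  obtain p where p: "p \<in> D \<times> {0..T}"
    and max: "\<And>q. q \<in> D \<times> {0..T} \<Longrightarrow> \<phi> (fst q) (snd q) \<le> \<phi> (fst p) (snd p)"
  proof (rule continuous_attains_sup_if_neg_outside_bounded[of "D \<times> {0..T}"
        "\<lambda>p. \<phi> (fst p) (snd p)" "ball 0 (\<bar>M\<bar> / \<delta> + 1) \<times> {0..T}" "(x, t)"])
    show "continuous_on (D \<times> {0..T}) (\<lambda>p. \<phi> (fst p) (snd p))"
      unfolding \<phi>_def by (intro continuous_intros continuous)
    show "\<phi> (fst q) (snd q) < 0" if "q \<in> D \<times> {0..T}" "q \<notin> ball 0 (\<bar>M\<bar> / \<delta> + 1) \<times> {0..T}" for q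
      using that penalty_dominates_far[OF \<delta>] by (cases q) (auto simp: \<phi>_def)
  qed (use closed_domain x t pos in \<open>auto intro: closed_Times bounded_Times\<close>)
  obtain xm tm where p_eq: "p = (xm, tm)" by fastforce
  have max_pos: "0 < \<phi> xm tm" using max[of "(x, t)"] x t pos p_eq by auto
  have penalty_pos: "0 < \<delta> * exp ((K + 3) * s) * (1 + y\<^sup>2)" for s y
    using \<delta> by (simp add: add_pos_nonneg)
  have "tm \<noteq> 0" using initial[of xm] max_pos p p_eq penalty_pos[of 0 xm] by (auto simp: \<phi>_def)
  then have tm: "tm \<in> {0<..T}" using p p_eq by auto
  have "0 < z xm tm" using max_pos penalty_pos[of tm xm] by (simp add: \<phi>_def)
  then have "xm \<in> interior D" using boundary[of xm tm] p p_eq by auto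
  then obtain d where d: "0 < d" "ball xm d \<subseteq> interior D"
    by (meson open_contains_ball open_interior)
  then have near: "y \<in> interior D" if "\<bar>y - xm\<bar> < d" for y
    using that by (auto simp: dist_real_def)
  show False
  proof (rule penalized_max_violates_subsolution[OF \<delta> d(1), of tm xm z zx zxx zt K "\<beta> xm tm"],
      fold \<phi>_def)
    show "\<phi> y tm \<le> \<phi> xm tm" if "\<bar>y - xm\<bar> < d" for y
      using max[of "(y, tm)"] near[OF that] tm interior_subset p_eq by auto
    show "\<phi> xm s \<le> \<phi> xm tm" if "0 \<le> s" "s < tm" for s
      using max[of "(xm, s)"] p p_eq that tm by auto
  qed (use tm near derivatives drift_bounded subsolution \<open>0 < z xm tm\<close> \<open>xm \<in> interior D\<close> in auto)
qed

lemma max_principle: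
  assumes x: "x \<in> D" and t: "t \<in> {0..T}"
  shows "z x t \<le> 0"
proof (rule field_le_epsilon)
  fix e :: real assume e: "0 < e"
  define c where "c = exp ((K + 3) * t) * (1 + x\<^sup>2)"
  have c: "0 < c" by (simp add: c_def add_pos_nonneg)
  have "z x t \<le> e / c * exp ((K + 3) * t) * (1 + x\<^sup>2)"
    using penalized_le[OF _ x t, of "e / c"] e c by simp
  also have "\<dots> = e" using c unfolding c_def by (simp add: field_simps)
  finally show "z x t \<le> 0 + e" by simp
qed

end

lemma elliptic_upper_bound:
  fixes w w' w'' f :: "real \<Rightarrow> real"
  assumes bounded: "bounded (range w)"
    and w': "\<And>x. (w has_real_derivative w' x) (at x)"
    and w'': "\<And>x. (w' has_real_derivative w'' x) (at x)"
    and eq: "\<And>x. w'' x = lam * w x - mu * f x"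
    and f: "\<And>x. f x \<le> M" and lam: "0 < lam" and mu: "0 \<le> mu"
  shows "w x0 \<le> mu * M / lam"
proof (rule field_le_epsilon)
  fix e :: real assume e: "0 < e"
  define \<eta> where "\<eta> = e * lam / 2"
  have \<eta>: "0 < \<eta>" using e lam by (simp add: \<eta>_def)
  obtain W where W: "\<And>x. \<bar>w x\<bar> \<le> W"
    using bounded unfolding bounded_iff by auto
  \<comment> \<open>\<open>w\<close> need not attain its supremum; the concave correction creates a maximum point\<close>
  define g where "g x = w x - w x0 + 1 - \<eta> * (x - x0)\<^sup>2" for x
  define R where "R = sqrt ((2 * W + 2) / \<eta>)"
  have g_neg: "g x < 0" if "x \<notin> ball x0 R" for x
  proof -
    have W0: "0 \<le> (2 * W + 2) / \<eta>" using \<eta> abs_ge_zero[THEN order_trans, OF W[of 0]] by simp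
    have "R \<le> \<bar>x - x0\<bar>" using that by (auto simp: dist_real_def abs_minus_commute)
    then have "R\<^sup>2 \<le> \<bar>x - x0\<bar>\<^sup>2" using W0 by (intro power_mono) (auto simp: R_def)
    then have "(2 * W + 2) / \<eta> \<le> (x - x0)\<^sup>2" using W0 by (simp add: R_def)
    then have "2 * W + 2 \<le> \<eta> * (x - x0)\<^sup>2" using \<eta> by (simp add: field_simps)
    then show ?thesis using W[of x] W[of x0] by (simp add: g_def abs_le_iff)
  qed
  have g': "(g has_real_derivative w' x - 2 * \<eta> * (x - x0)) (at x)" for x
    unfolding g_def by (auto intro!: derivative_eq_intros w')
  then have "continuous_on UNIV g"
    by (meson DERIV_isCont continuous_at_imp_continuous_on)
  then obtain xm where max: "\<And>x. g x \<le> g xm"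
    using continuous_attains_sup_if_neg_outside_bounded[of UNIV g "ball x0 R" x0] g_neg
    by (auto simp: g_def)
  have "((\<lambda>x. w' x - 2 * \<eta> * (x - x0)) has_real_derivative w'' xm - 2 * \<eta>) (at xm)"
    by (auto intro!: derivative_eq_intros w'')
  then have "w'' xm - 2 * \<eta> \<le> 0"
    using second_derivative_test_max(2)[of 1 xm g "\<lambda>x. w' x - 2 * \<eta> * (x - x0)"] g' max by force
  then have "lam * w xm \<le> 2 * \<eta> + mu * M"
    using eq[of xm] mult_left_mono[OF f[of xm] mu] by linarith
  moreover have "w x0 \<le> w xm"
    using max[of x0] \<eta> by (simp add: g_def) (smt (verit) zero_le_power2 mult_nonneg_nonneg)
  ultimately have "lam * w x0 \<le> 2 * \<eta> + mu * M"
    using lam by (smt (verit) mult_left_mono)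
  then show "w x0 \<le> mu * M / lam + e"
    using lam by (simp add: \<eta>_def field_simps)
qed

lemma elliptic_deriv_bound:
  fixes w w' w'' f :: "real \<Rightarrow> real"
  assumes bounded: "bounded (range w)"
    and w': "\<And>x. (w has_real_derivative w' x) (at x)"
    and w'': "\<And>x. (w' has_real_derivative w'' x) (at x)"
    and eq: "\<And>x. w'' x = lam * w x - mu * f x"
    and f: "\<And>x. f x \<le> M" "\<And>x. 0 \<le> f x" and w_nonneg: "\<And>x. 0 \<le> w x"
    and lam: "0 < lam" and mu: "0 \<le> mu"
  shows "\<bar>w' x\<bar> \<le> mu * M / lam + mu * M"
proof -
  have w_le: "w y \<le> mu * M / lam" for y
    by (rule elliptic_upper_bound[OF bounded w' w'' eq f(1) lam mu])
  have w''_le: "\<bar>w'' y\<bar> \<le> mu * M" for y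
  proof -
    have "lam * w y \<le> mu * M" using mult_left_mono[OF w_le[of y], of lam] lam by simp
    moreover have "mu * f y \<le> mu * M" "0 \<le> mu * f y" "0 \<le> lam * w y"
      using f[of y] w_nonneg[of y] mu lam by (auto intro: mult_left_mono)
    ultimately show ?thesis using eq[of y] by simp
  qed
  obtain s where s: "x < s" "s < x + 1" "w (x + 1) - w x = (x + 1 - x) * w' s"
    using MVT2[of x "x + 1" w w'] w' by auto
  obtain r where r: "x < r" "r < s" "w' s - w' x = (s - x) * w'' r"
    using MVT2[of x s w' w''] w'' s(1) by auto
  have "\<bar>(s - x) * w'' r\<bar> \<le> 1 * (mu * M)"
    unfolding abs_mult using s w''_le[of r] by (intro mult_mono) auto
  moreover have "\<bar>w' s\<bar> \<le> mu * M / lam"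
    using s(3) w_le[of x] w_le[of "x + 1"] w_nonneg[of x] w_nonneg[of "x + 1"] by simp
  ultimately show ?thesis using r(3) by linarith
qed

lemma continuous_on_apply_bcontfun_joint:
  fixes U :: "'b::metric_space \<Rightarrow> ('a::metric_space \<Rightarrow>\<^sub>C 'c::metric_space)"
  assumes U: "continuous_on T U"
  shows "continuous_on (UNIV \<times> T) (\<lambda>p. apply_bcontfun (U (snd p)) (fst p))"
  unfolding continuous_on_iff
proof (intro ballI allI impI)
  fix p :: "'a \<times> 'b" and e :: real
  assume p: "p \<in> UNIV \<times> T" and e: "0 < e"
  obtain x t where p_eq: "p = (x, t)" by fastforce
  with p have t: "t \<in> T" by auto
  obtain d1 where d1: "0 < d1" "\<And>t'. t' \<in> T \<Longrightarrow> dist t' t < d1 \<Longrightarrow> dist (U t') (U t) < e / 2"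
    using U t e unfolding continuous_on_iff by (metis half_gt_zero)
  have "isCont (U t) x"
    using continuous_on_apply_bcontfun continuous_on_eq_continuous_at open_UNIV by blast
  then obtain d2 where d2: "0 < d2" "\<And>x'. dist x' x < d2 \<Longrightarrow> dist (U t x') (U t x) < e / 2"
    unfolding continuous_at_eps_delta using e by (metis half_gt_zero)
  show "\<exists>d>0. \<forall>p'\<in>UNIV \<times> T. dist p' p < d \<longrightarrow>
          dist (apply_bcontfun (U (snd p')) (fst p')) (apply_bcontfun (U (snd p)) (fst p)) < e"
  proof (intro exI[of _ "min d1 d2"] conjI ballI impI)
    fix p' assume p': "p' \<in> UNIV \<times> T" "dist p' p < min d1 d2"
    obtain x' t' where p'_eq: "p' = (x', t')" by fastforce
    have "dist t' t < d1" "dist x' x < d2"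
      using p' dist_snd_le[of p' p] dist_fst_le[of p' p] by (auto simp: p_eq p'_eq)
    then have "dist (U t') (U t) < e / 2" "dist (U t x') (U t x) < e / 2"
      using d1 d2 p' p'_eq by auto
    moreover have "dist (U t' x') (U t x') \<le> dist (U t') (U t)" by (rule dist_bounded)
    ultimately have "dist (U t' x') (U t x) < e"
      using dist_triangle[of "U t' x'" "U t x" "U t x'"] by linarith
    then show "dist (apply_bcontfun (U (snd p')) (fst p')) (apply_bcontfun (U (snd p)) (fst p)) < e"
      by (simp add: p_eq p'_eq)
  qed (use d1 d2 in simp)
qed

lemma neg_deriv_le_interpolation:
  fixes f f' f'' :: "real \<Rightarrow> real"
  assumes h: "0 < h"
    and f': "\<And>y. x \<le> y \<Longrightarrow> y \<le> x + h \<Longrightarrow> (f has_real_derivative f' y) (at y)"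
    and f'': "\<And>y. x \<le> y \<Longrightarrow> y \<le> x + h \<Longrightarrow> (f' has_real_derivative f'' y) (at y)"
    and f''_le: "\<And>y. x \<le> y \<Longrightarrow> y \<le> x + h \<Longrightarrow> \<bar>f'' y\<bar> \<le> \<eta>"
    and pos: "0 < f (x + h)"
  shows "- f' x \<le> f x / h + h * \<eta>"
proof -
  obtain s where s: "x < s" "s < x + h" "f (x + h) - f x = (x + h - x) * f' s"
    using MVT2[of x "x + h" f f'] f' h by force
  obtain r where r: "x < r" "r < s" "f' s - f' x = (s - x) * f'' r"
    using MVT2[of x s f' f''] f'' s by force
  have "\<bar>(s - x) * f'' r\<bar> \<le> h * \<eta>"
    unfolding abs_mult using s r f''_le[of r] by (intro mult_mono) auto
  then have "f' s - h * \<eta> \<le> f' x" using r(3) by linarith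
  moreover have "- f x / h < f' s"
    using s(3) pos h by (simp add: field_simps)
  ultimately show ?thesis by (simp add: field_simps)
qed

lemma deriv_nonpos_imp_antimono:
  fixes f f' :: "real \<Rightarrow> real"
  assumes f': "\<And>x. \<xi> < x \<Longrightarrow> (f has_real_derivative f' x) (at x)"
    and dec: "\<And>x. \<xi> < x \<Longrightarrow> f' x \<le> 0"
    and "\<xi> < x" "x \<le> y"
  shows "f y \<le> f x"
proof (rule DERIV_nonpos_imp_nonincreasing[OF \<open>x \<le> y\<close>])
  fix z assume "x \<le> z"
  then have "\<xi> < z" using \<open>\<xi> < x\<close> by linarith
  then show "\<exists>l. (f has_real_derivative l) (at z) \<and> l \<le> 0" using f' dec by blast
qed

lemma tendsto_deriv_div_zero:
  fixes f f' f'' :: "real \<Rightarrow> real"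
  assumes f': "\<And>x. \<xi> < x \<Longrightarrow> (f has_real_derivative f' x) (at x)"
    and f'': "\<And>x. \<xi> < x \<Longrightarrow> (f' has_real_derivative f'' x) (at x)"
    and dec: "\<And>x. \<xi> < x \<Longrightarrow> f' x \<le> 0"
    and pos: "\<And>x. \<xi> < x \<Longrightarrow> 0 < f x"
    and lim: "((\<lambda>x. f'' x / f x) \<longlongrightarrow> 0) at_top"
  shows "((\<lambda>x. f' x / f x) \<longlongrightarrow> 0) at_top"
proof (rule tendstoI)
  fix e :: real assume e: "0 < e"
  define h where "h = 4 / e"
  define \<eta> where "\<eta> = e\<^sup>2 / 16"
  have h: "0 < h" and \<eta>: "0 < \<eta>" using e by (auto simp: h_def \<eta>_def)
  have mono: "f y \<le> f x" if "\<xi> < x" "x \<le> y" for x y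
    using deriv_nonpos_imp_antimono[OF f' dec that] .
  have "\<forall>\<^sub>F x in at_top. dist (f'' x / f x) 0 < \<eta> \<and> \<xi> < x"
    using tendstoD[OF lim \<eta>] eventually_gt_at_top by (rule eventually_conj)
  then obtain X where X: "\<And>x. X \<le> x \<Longrightarrow> \<bar>f'' x / f x\<bar> < \<eta> \<and> \<xi> < x"
    by (auto simp: eventually_at_top_linorder)
  have "\<bar>f' x / f x\<bar> < e" if x: "X \<le> x" for x
  proof -
    have fx: "0 < f x" using X[OF x] pos by blast
    have "\<bar>f'' y\<bar> \<le> \<eta> * f x" if "x \<le> y" for y
    proof -
      have "\<bar>f'' y\<bar> \<le> \<eta> * f y"
        using X[of y] x that pos[of y] by (auto simp: abs_divide divide_less_eq less_imp_le)
      also have "\<dots> \<le> \<eta> * f x" using mono[of x y] X[OF x] that \<eta> by simp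
      finally show ?thesis .
    qed
    then have "- f' x \<le> f x / h + h * (\<eta> * f x)"
      using X x h by (intro neg_deriv_le_interpolation[where f''=f'']) (auto intro!: f' f'' pos)
    also have "\<dots> = e / 2 * f x" using e by (simp add: h_def \<eta>_def field_simps power2_eq_square)
    finally have "- f' x \<le> e / 2 * f x" .
    moreover have "f' x \<le> 0" using dec X[OF x] by blast
    moreover have "0 < e * f x" using e fx by simp
    ultimately have "\<bar>f' x\<bar> < e * f x" by (simp add: abs_of_nonpos)
    then show ?thesis using fx by (simp add: abs_divide divide_less_eq)
  qed
  then show "\<forall>\<^sub>F x in at_top. dist (f' x / f x) 0 < e"
    by (auto simp: eventually_at_top_linorder intro!: exI[of _ X])
qed

lemma eventually_drift_operator_le:
  fixes f f' f'' :: "real \<Rightarrow> real"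
  assumes f': "\<And>x. \<xi> < x \<Longrightarrow> (f has_real_derivative f' x) (at x)"
    and f'': "\<And>x. \<xi> < x \<Longrightarrow> (f' has_real_derivative f'' x) (at x)"
    and dec: "\<And>x. \<xi> < x \<Longrightarrow> f' x \<le> 0"
    and pos: "\<And>x. \<xi> < x \<Longrightarrow> 0 < f x"
    and lim: "((\<lambda>x. f'' x / f x) \<longlongrightarrow> 0) at_top"
    and \<epsilon>: "0 < \<epsilon>"
  shows "\<forall>\<^sub>F x in at_top. \<forall>\<beta>. \<bar>\<beta>\<bar> \<le> K \<longrightarrow> f'' x - \<beta> * f' x \<le> \<epsilon> * f x"
proof -
  define c where "c = \<epsilon> / (2 * (\<bar>K\<bar> + 1))"
  have c: "0 < c" using \<epsilon> by (simp add: c_def add_pos_nonneg)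
  have "\<forall>\<^sub>F x in at_top. dist (f'' x / f x) 0 < \<epsilon> / 2 \<and> dist (f' x / f x) 0 < c \<and> \<xi> < x"
    using \<epsilon> c by (intro eventually_conj tendstoD[OF lim] eventually_gt_at_top
        tendstoD[OF tendsto_deriv_div_zero[OF assms(1-5)]]) auto
  then show ?thesis
  proof (rule eventually_mono, intro allI impI)
    fix x \<beta> assume x: "dist (f'' x / f x) 0 < \<epsilon> / 2 \<and> dist (f' x / f x) 0 < c \<and> \<xi> < x"
      and \<beta>: "\<bar>\<beta>\<bar> \<le> K"
    have fx: "0 < f x" using x pos by blast
    have "\<bar>f'' x\<bar> < \<epsilon> / 2 * f x"
      using x fx by (simp add: abs_divide divide_less_eq)
    then have "f'' x \<le> \<epsilon> / 2 * f x" by linarith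
    moreover have "- \<beta> * f' x \<le> \<bar>K\<bar> * (c * f x)"
    proof -
      have "- \<beta> * f' x \<le> \<bar>\<beta>\<bar> * \<bar>f' x\<bar>" by (simp add: abs_mult[symmetric])
      also have "\<dots> \<le> \<bar>K\<bar> * (c * f x)"
        using x fx \<beta> by (intro mult_mono) (auto simp: abs_divide divide_less_eq)
      finally show ?thesis .
    qed
    moreover have "\<bar>K\<bar> * c \<le> \<epsilon> / 2"
      using \<epsilon> by (simp add: c_def field_simps)
    then have "\<bar>K\<bar> * (c * f x) \<le> \<epsilon> / 2 * f x"
      using fx by (metis mult.assoc mult_right_mono less_imp_le)
    ultimately show "f'' x - \<beta> * f' x \<le> \<epsilon> * f x" by linarith
  qed
qed

locale chemotaxis_solution =
  fixes chi a b lam mu :: real and u0 :: "real \<Rightarrow> real" and u v :: "real \<Rightarrow> real \<Rightarrow> real"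
  assumes chi_nonneg: "0 \<le> chi" and a_pos: "0 < a" and lam_pos: "0 < lam" and mu_pos: "0 < mu"
    and logistic_dominates: "chi * mu < b"
    and u0_bounded: "bounded (range u0)"
    and solution: "classical_solution chi a b lam mu u0 u v"
begin

abbreviation u_x :: "real \<Rightarrow> real \<Rightarrow> real" where "u_x t \<equiv> deriv (\<lambda>y. u y t)"
abbreviation u_xx :: "real \<Rightarrow> real \<Rightarrow> real" where "u_xx t \<equiv> deriv (u_x t)"
abbreviation v_x :: "real \<Rightarrow> real \<Rightarrow> real" where "v_x t \<equiv> deriv (\<lambda>y. v y t)"

definition u_t :: "real \<Rightarrow> real \<Rightarrow> real" where
  "u_t x t = u_xx t x - chi * deriv (\<lambda>y. u y t * v_x t y) x + u x t * (a - b * u x t)"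

lemma u_initial: "u x 0 = u0 x"
  using solution by (simp add: classical_solution_def)

lemma u_nonneg: "0 \<le> t \<Longrightarrow> 0 \<le> u x t"
  using solution by (simp add: classical_solution_def)

lemma v_nonneg: "0 < t \<Longrightarrow> 0 \<le> v x t"
  using solution by (simp add: classical_solution_def)

lemma v_bounded: "0 < t \<Longrightarrow> bounded (range (\<lambda>x. v x t))"
  using solution by (simp add: classical_solution_def)

lemma pointwise_equations:
  assumes "0 < t"
  shows "(\<lambda>y. u y t) differentiable (at x)" "u_x t differentiable (at x)"
    and "(\<lambda>y. v y t) differentiable (at x)" "v_x t differentiable (at x)"
    and "((\<lambda>s. u x s) has_real_derivative u_t x t) (at t)"
    and "deriv (v_x t) x = lam * v x t - mu * u x t"
  using solution assms unfolding classical_solution_def u_t_def by (auto simp: algebra_simps)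

lemma u_x_deriv: "0 < t \<Longrightarrow> ((\<lambda>y. u y t) has_real_derivative u_x t x) (at x)"
  using pointwise_equations(1) DERIV_deriv_iff_real_differentiable by blast

lemma u_xx_deriv: "0 < t \<Longrightarrow> (u_x t has_real_derivative u_xx t x) (at x)"
  using pointwise_equations(2) DERIV_deriv_iff_real_differentiable by blast

lemma v_x_deriv: "0 < t \<Longrightarrow> ((\<lambda>y. v y t) has_real_derivative v_x t x) (at x)"
  using pointwise_equations(3) DERIV_deriv_iff_real_differentiable by blast

lemma v_xx_deriv: "0 < t \<Longrightarrow> (v_x t has_real_derivative deriv (v_x t) x) (at x)"
  using pointwise_equations(4) DERIV_deriv_iff_real_differentiable by blast

lemmas u_t_deriv = pointwise_equations(5)
lemmas v_equation = pointwise_equations(6)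

lemma u_t_le:
  assumes t: "0 < t"
  shows "u_t x t \<le> u_xx t x - chi * v_x t x * u_x t x + u x t * (a - (b - chi * mu) * u x t)"
proof -
  have product:
    "deriv (\<lambda>y. u y t * v_x t y) x = u x t * (lam * v x t - mu * u x t) + u_x t x * v_x t x"
    using DERIV_imp_deriv[OF DERIV_mult[OF u_x_deriv[OF t] v_xx_deriv[OF t]]] v_equation[OF t]
    by simp
  have "u_t x t = u_xx t x - chi * v_x t x * u_x t x - chi * lam * (u x t * v x t)
      + u x t * (a - (b - chi * mu) * u x t)"
    unfolding u_t_def product by (simp add: algebra_simps)
  moreover have "0 \<le> chi * lam * (u x t * v x t)"
    using chi_nonneg lam_pos u_nonneg[of t x] v_nonneg[OF t, of x] t by simp
  ultimately show ?thesis by linarith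
qed

lemma u_t_le_above_equilibrium:
  assumes t: "0 < t" and above: "a / (b - chi * mu) \<le> u x t"
  shows "u_t x t \<le> u_xx t x - chi * v_x t x * u_x t x"
proof -
  have "a \<le> (b - chi * mu) * u x t"
    using above logistic_dominates by (simp add: pos_divide_le_eq mult.commute)
  then have "u x t * (a - (b - chi * mu) * u x t) \<le> 0"
    using u_nonneg[of t x] t by (simp add: mult_nonneg_nonpos)
  then show ?thesis using u_t_le[OF t, of x] by simp
qed

lemma u_t_le_linear:
  assumes "0 < t"
  shows "u_t x t - a * u x t \<le> u_xx t x - chi * v_x t x * u_x t x"
proof -
  have "0 \<le> (b - chi * mu) * (u x t * u x t)" using logistic_dominates by simp
  then show ?thesis using u_t_le[OF assms, of x] by (simp add: algebra_simps)
qed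

lemma u_continuous_path:
  obtains U :: "real \<Rightarrow> (real \<Rightarrow>\<^sub>C real)"
  where "\<And>t x. 0 \<le> t \<Longrightarrow> u x t = apply_bcontfun (U t) x" "continuous_on {0..} U"
proof -
  obtain U :: "real \<Rightarrow> (real \<Rightarrow>\<^sub>C real)"
    where "\<forall>t\<ge>0. \<forall>x. u x t = apply_bcontfun (U t) x" "continuous_on {0..} U"
    using solution[unfolded classical_solution_def, THEN conjunct1] by blast
  then show thesis using that by blast
qed

lemma u_continuous: "continuous_on (UNIV \<times> {0..T}) (\<lambda>p. u (fst p) (snd p))"
proof -
  obtain U where U: "\<And>t x. 0 \<le> t \<Longrightarrow> u x t = apply_bcontfun (U t) x" "continuous_on {0..} U"
    using u_continuous_path by metis
  have "continuous_on (UNIV \<times> {0..T}) (\<lambda>p. apply_bcontfun (U (snd p)) (fst p))"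
    by (rule continuous_on_apply_bcontfun_joint[OF continuous_on_subset[OF U(2)]]) auto
  then show ?thesis
    by (rule continuous_on_eq) (simp add: U(1) mem_Times_iff)
qed

lemma u_bounded_on_strip: obtains M where "\<And>x t. t \<in> {0..T} \<Longrightarrow> u x t \<le> M"
proof -
  obtain U where U: "\<And>t x. 0 \<le> t \<Longrightarrow> u x t = apply_bcontfun (U t) x" "continuous_on {0..} U"
    using u_continuous_path by metis
  have "compact (U ` {0..T})"
    by (rule compact_continuous_image[OF continuous_on_subset[OF U(2)]]) auto
  then obtain M where M: "\<And>f. f \<in> U ` {0..T} \<Longrightarrow> norm f \<le> M"
    using compact_imp_bounded bounded_iff by metis
  have "u x t \<le> M" if "t \<in> {0..T}" for x t
  proof -
    have "u x t \<le> norm (apply_bcontfun (U t) x)" using U(1) that by simp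
    also have "\<dots> \<le> norm (U t)" by (rule norm_bounded)
    also have "\<dots> \<le> M" using M that by auto
    finally show ?thesis .
  qed
  then show thesis by (rule that)
qed

lemma drift_bound:
  assumes t: "0 < t" and M: "\<And>y. u y t \<le> M"
  shows "\<bar>chi * v_x t x\<bar> \<le> chi * (mu * M / lam + mu * M)"
proof -
  have "\<bar>v_x t x\<bar> \<le> mu * M / lam + mu * M"
    by (rule elliptic_deriv_bound[OF v_bounded[OF t] v_x_deriv[OF t] v_xx_deriv[OF t]
          v_equation[OF t] M]) (use u_nonneg v_nonneg t lam_pos mu_pos in auto)
  then show ?thesis using chi_nonneg by (simp add: abs_mult mult_left_mono)
qed

lemma u_bounded: obtains M where "0 < M" "\<And>x t. 0 \<le> t \<Longrightarrow> u x t \<le> M"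
proof -
  obtain B where B: "\<And>x. \<bar>u0 x\<bar> \<le> B"
    using u0_bounded unfolding bounded_iff by auto
  define M where "M = max B (a / (b - chi * mu))"
  have M_ge: "B \<le> M" "a / (b - chi * mu) \<le> M" by (simp_all add: M_def)
  have "0 < a / (b - chi * mu)" using a_pos logistic_dominates by simp
  then have M: "0 < M" using M_ge(2) by linarith
  have "u x T - M \<le> 0" if T: "0 \<le> T" for x T
  proof -
    obtain MT where MT: "\<And>x t. t \<in> {0..T} \<Longrightarrow> u x t \<le> MT" using u_bounded_on_strip by metis
    show ?thesis
    proof (rule parabolic_subsolution.max_principle[where D=UNIV and z="\<lambda>x t. u x t - M"
          and zx="\<lambda>x t. u_x t x" and zxx="\<lambda>x t. u_xx t x" and zt=u_t and \<beta>="\<lambda>x t. chi * v_x t x"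
          and M="MT - M" and K="chi * (mu * MT / lam + mu * MT)"], unfold_locales)
      show "continuous_on (UNIV \<times> {0..T}) (\<lambda>p. u (fst p) (snd p) - M)"
        by (intro continuous_intros u_continuous)
      show "u x 0 - M \<le> 0" for x
        using B[of x] M_ge(1) abs_ge_self[of "u0 x"] u_initial[of x] by linarith
      show "((\<lambda>y. u y t - M) has_real_derivative u_x t x) (at x) \<and>
          ((\<lambda>y. u_x t y) has_real_derivative u_xx t x) (at x) \<and>
          ((\<lambda>s. u x s - M) has_real_derivative u_t x t) (at t)" if "t \<in> {0<..T}" for x t
        using DERIV_diff[OF u_x_deriv DERIV_const] u_xx_deriv DERIV_diff[OF u_t_deriv DERIV_const]
          that by simp
      show "\<bar>chi * v_x t x\<bar> \<le> chi * (mu * MT / lam + mu * MT)" if "t \<in> {0<..T}" for x t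
        using drift_bound[of t MT x] MT that by simp
      show "0 \<le> chi * (mu * MT / lam + mu * MT)"
        using MT[of 0 x] u_nonneg[of 0 x] chi_nonneg lam_pos mu_pos T by simp
      show "u_t x t \<le> u_xx t x - chi * v_x t x * u_x t x" if "t \<in> {0<..T}" "0 < u x t - M" for x t
        using u_t_le_above_equilibrium[of t x] M_ge(2) that by simp
    qed (use MT T in auto)
  qed
  then show thesis using M that by force
qed

lemma drift_bounded: obtains K where "0 \<le> K" "\<And>x t. 0 < t \<Longrightarrow> \<bar>chi * v_x t x\<bar> \<le> K"
proof -
  obtain M where M: "0 < M" "\<And>x t. 0 \<le> t \<Longrightarrow> u x t \<le> M" using u_bounded by metis
  define K where "K = chi * (mu * M / lam + mu * M)"
  have "\<bar>chi * v_x t x\<bar> \<le> K" if "0 < t" for x t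
    using drift_bound[of t M x] M that by (simp add: K_def)
  moreover have "0 \<le> K" using M chi_nonneg lam_pos mu_pos by (simp add: K_def)
  ultimately show thesis using that by blast
qed

lemma weighted_u_derivatives:
  assumes s: "0 < s"
  shows "((\<lambda>y. exp (- a * s) * u y s) has_real_derivative exp (- a * s) * u_x s y) (at y)"
    and "((\<lambda>y. exp (- a * s) * u_x s y) has_real_derivative exp (- a * s) * u_xx s y) (at y)"
    and "((\<lambda>s. exp (- a * s) * u y s) has_real_derivative exp (- a * s) * (u_t y s - a * u y s))
      (at s)"
  using u_x_deriv[OF s] u_xx_deriv[OF s]
  by (auto intro!: DERIV_cmult derivative_eq_intros u_t_deriv[OF s] simp: algebra_simps)

lemma weighted_difference_subsolution:
  assumes s: "0 < s" and profile: "S'' - chi * v_x s y * S' \<le> \<epsilon> * S"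
  shows "exp (- a * s) * (u_t y s - a * u y s) - \<epsilon> * exp (\<epsilon> * s) * S
    \<le> exp (- a * s) * u_xx s y - exp (\<epsilon> * s) * S''
      - chi * v_x s y * (exp (- a * s) * u_x s y - exp (\<epsilon> * s) * S')"
proof -
  have "exp (- a * s) * (u_t y s - a * u y s)
      \<le> exp (- a * s) * (u_xx s y - chi * v_x s y * u_x s y)"
    using u_t_le_linear[OF s, of y] by (intro mult_left_mono) auto
  moreover have "exp (\<epsilon> * s) * (S'' - chi * v_x s y * S') \<le> exp (\<epsilon> * s) * (\<epsilon> * S)"
    using profile by (intro mult_left_mono) auto
  ultimately show ?thesis by (simp add: algebra_simps)
qed

lemma weighted_u_le_profile:
  fixes S S' S'' :: "real \<Rightarrow> real"
  assumes S': "\<And>x. X \<le> x \<Longrightarrow> (S has_real_derivative S' x) (at x)"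
    and S'': "\<And>x. X \<le> x \<Longrightarrow> (S' has_real_derivative S'' x) (at x)"
    and S_nonneg: "\<And>x. X \<le> x \<Longrightarrow> 0 \<le> S x"
    and profile: "\<And>x t. X \<le> x \<Longrightarrow> 0 < t \<Longrightarrow> S'' x - chi * v_x t x * S' x \<le> \<epsilon> * S x"
    and initial: "\<And>x. X \<le> x \<Longrightarrow> u0 x \<le> S x"
    and boundary: "\<And>t. 0 \<le> t \<Longrightarrow> u X t \<le> S X"
    and \<epsilon>: "0 \<le> \<epsilon>" and x: "X \<le> x" and t: "0 \<le> t"
  shows "exp (- a * t) * u x t \<le> exp (\<epsilon> * t) * S x"
proof -
  obtain M where M: "\<And>x t. 0 \<le> t \<Longrightarrow> u x t \<le> M" using u_bounded by metis
  obtain K where K: "0 \<le> K" "\<And>x t. 0 < t \<Longrightarrow> \<bar>chi * v_x t x\<bar> \<le> K" using drift_bounded by metis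
  have weighted_u_le: "exp (- a * s) * u y s \<le> u y s" if "0 \<le> s" for y s
    using mult_right_mono[of "exp (- a * s)" 1 "u y s"] u_nonneg[OF that] a_pos that by simp
  have "continuous_on {X..} S"
    using DERIV_isCont[OF S'] by (intro continuous_at_imp_continuous_on) simp
  then have S_cont: "continuous_on ({X..} \<times> {0..t}) (\<lambda>p. S (fst p))"
    by (rule continuous_on_compose2[OF _ continuous_on_fst[OF continuous_on_id]]) auto
  \<comment> \<open>\<open>e\<^sup>-\<^sup>a\<^sup>t u\<close> is a subsolution and \<open>e\<^sup>\<epsilon>\<^sup>t S\<close> a supersolution of \<open>w\<^sub>t = w\<^sub>x\<^sub>x - \<chi> v\<^sub>x w\<^sub>x\<close>\<close>
  have "exp (- a * t) * u x t - exp (\<epsilon> * t) * S x \<le> 0"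
  proof (rule parabolic_subsolution.max_principle[where D="{X..}" and T=t
        and z="\<lambda>x t. exp (- a * t) * u x t - exp (\<epsilon> * t) * S x"
        and zx="\<lambda>x t. exp (- a * t) * u_x t x - exp (\<epsilon> * t) * S' x"
        and zxx="\<lambda>x t. exp (- a * t) * u_xx t x - exp (\<epsilon> * t) * S'' x"
        and zt="\<lambda>x t. exp (- a * t) * (u_t x t - a * u x t) - \<epsilon> * exp (\<epsilon> * t) * S x"
        and \<beta>="\<lambda>x t. chi * v_x t x" and M=M and K=K], unfold_locales)
    show "continuous_on ({X..} \<times> {0..t})
        (\<lambda>p. exp (- a * snd p) * u (fst p) (snd p) - exp (\<epsilon> * snd p) * S (fst p))"
      by (intro continuous_intros continuous_on_subset[OF u_continuous] S_cont) auto
    show "exp (- a * s) * u y s - exp (\<epsilon> * s) * S y \<le> M" if "y \<in> {X..}" "s \<in> {0..t}" for y s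
      using weighted_u_le[of s y] M[of s y] S_nonneg[of y] that
      by (simp add: diff_le_eq add_increasing2)
    show "exp (- a * 0) * u y 0 - exp (\<epsilon> * 0) * S y \<le> 0" if "y \<in> {X..}" for y
      using initial[of y] that by (simp add: u_initial)
    show "exp (- a * s) * u y s - exp (\<epsilon> * s) * S y \<le> 0"
      if "y \<in> {X..}" "y \<notin> interior {X..}" "s \<in> {0..t}" for y s
    proof -
      have "S X \<le> exp (\<epsilon> * s) * S X"
        using mult_right_mono[of 1 "exp (\<epsilon> * s)" "S X"] S_nonneg[of X] \<epsilon> that(3) by simp
      then show ?thesis using weighted_u_le[of s X] boundary[of s] that by auto
    qed
    fix y s assume "y \<in> interior {X..}" "s \<in> {0<..t}"
    then have s: "0 < s" and y: "X \<le> y" by auto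
    show "((\<lambda>y. exp (- a * s) * u y s - exp (\<epsilon> * s) * S y) has_real_derivative
          exp (- a * s) * u_x s y - exp (\<epsilon> * s) * S' y) (at y) \<and>
        ((\<lambda>y. exp (- a * s) * u_x s y - exp (\<epsilon> * s) * S' y) has_real_derivative
          exp (- a * s) * u_xx s y - exp (\<epsilon> * s) * S'' y) (at y) \<and>
        ((\<lambda>s. exp (- a * s) * u y s - exp (\<epsilon> * s) * S y) has_real_derivative
          exp (- a * s) * (u_t y s - a * u y s) - \<epsilon> * exp (\<epsilon> * s) * S y) (at s)"
      using weighted_u_derivatives[OF s, of y] S'[OF y] S''[OF y]
      by (auto intro!: DERIV_diff DERIV_cmult derivative_eq_intros)
    show "\<bar>chi * v_x s y\<bar> \<le> K" using K(2)[OF s] .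
    show "exp (- a * s) * (u_t y s - a * u y s) - \<epsilon> * exp (\<epsilon> * s) * S y
        \<le> exp (- a * s) * u_xx s y - exp (\<epsilon> * s) * S'' y
          - chi * v_x s y * (exp (- a * s) * u_x s y - exp (\<epsilon> * s) * S' y)"
      using weighted_difference_subsolution[OF s profile[OF y s]] .
  qed (use K x t in auto)
  then show ?thesis by simp
qed

lemma u_tail_bound:
  fixes u0' u0'' :: "real \<Rightarrow> real"
  assumes u0': "\<And>x. \<xi> < x \<Longrightarrow> (u0 has_real_derivative u0' x) (at x)"
    and u0'': "\<And>x. \<xi> < x \<Longrightarrow> (u0' has_real_derivative u0'' x) (at x)"
    and dec: "\<And>x. \<xi> < x \<Longrightarrow> u0' x \<le> 0"
    and pos: "\<And>x. 0 < u0 x"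
    and lim: "((\<lambda>x. u0'' x / u0 x) \<longlongrightarrow> 0) at_top"
    and \<epsilon>: "0 < \<epsilon>"
  obtains X C where "\<xi> < X" "0 < C"
    "\<And>x t. X \<le> x \<Longrightarrow> 0 \<le> t \<Longrightarrow> u x t \<le> C * exp ((a + \<epsilon>) * t) * u0 x"
proof -
  obtain M where M: "\<And>x t. 0 \<le> t \<Longrightarrow> u x t \<le> M" using u_bounded by metis
  obtain K where K: "\<And>x t. 0 < t \<Longrightarrow> \<bar>chi * v_x t x\<bar> \<le> K" using drift_bounded by metis
  have "\<forall>\<^sub>F x in at_top. (\<forall>\<beta>. \<bar>\<beta>\<bar> \<le> K \<longrightarrow> u0'' x - \<beta> * u0' x \<le> \<epsilon> * u0 x) \<and> \<xi> < x"
    using eventually_drift_operator_le[OF u0' u0'' dec pos lim \<epsilon>] eventually_gt_at_top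
    by (rule eventually_conj)
  then obtain X where X_ev: "\<And>x. X \<le> x \<Longrightarrow>
      (\<forall>\<beta>. \<bar>\<beta>\<bar> \<le> K \<longrightarrow> u0'' x - \<beta> * u0' x \<le> \<epsilon> * u0 x) \<and> \<xi> < x"
    unfolding eventually_at_top_linorder by blast
  then have X: "\<xi> < X"
    "\<And>x \<beta>. X \<le> x \<Longrightarrow> \<bar>\<beta>\<bar> \<le> K \<Longrightarrow> u0'' x - \<beta> * u0' x \<le> \<epsilon> * u0 x"
    by auto
  define C where "C = max 1 (M / u0 X)"
  have "M / u0 X \<le> C" by (simp add: C_def)
  then have C: "1 \<le> C" "M \<le> C * u0 X"
    using pos[of X] by (simp add: C_def, simp add: pos_divide_le_eq)
  have weighted: "exp (- a * t) * u x t \<le> exp (\<epsilon> * t) * (C * u0 x)"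
    if "X \<le> x" "0 \<le> t" for x t
  proof (rule weighted_u_le_profile[where S'="\<lambda>x. C * u0' x" and S''="\<lambda>x. C * u0'' x"])
    show "((\<lambda>x. C * u0 x) has_real_derivative C * u0' y) (at y)"
      "((\<lambda>x. C * u0' x) has_real_derivative C * u0'' y) (at y)"
      "0 \<le> C * u0 y" if "X \<le> y" for y
      using DERIV_cmult[OF u0'] DERIV_cmult[OF u0''] X(1) that C(1) pos[of y] by simp_all
    show "C * u0'' y - chi * v_x s y * (C * u0' y) \<le> \<epsilon> * (C * u0 y)"
      if "X \<le> y" "0 < s" for y s
      using mult_left_mono[OF X(2)[OF that(1) K[OF that(2)]], of C] C(1)
      by (simp add: algebra_simps)
    show "u0 y \<le> C * u0 y" for y
      using mult_right_mono[OF C(1), of "u0 y"] pos[of y] by simp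
    show "u X s \<le> C * u0 X" if "0 \<le> s" for s using M[OF that, of X] C(2) by simp
  qed (use \<epsilon> that in simp_all)
  have bound: "u x t \<le> C * exp ((a + \<epsilon>) * t) * u0 x" if "X \<le> x" "0 \<le> t" for x t
  proof -
    have "u x t = exp (a * t) * (exp (- a * t) * u x t)" by (simp add: exp_minus field_simps)
    also have "\<dots> \<le> exp (a * t) * (exp (\<epsilon> * t) * (C * u0 x))"
      using weighted[OF that] by (intro mult_left_mono) auto
    also have "\<dots> = C * exp ((a + \<epsilon>) * t) * u0 x" by (simp add: ring_distribs exp_add)
    finally show ?thesis .
  qed
  show thesis by (rule that[OF X(1) _ bound]) (use C(1) in simp)
qed

end

lemma Liminf_at_bot_pos_imp_bounded_below:
  fixes f :: "real \<Rightarrow> real"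
  assumes cont: "continuous_on UNIV f" and pos: "\<And>x. 0 < f x"
    and liminf: "0 < Liminf at_bot (\<lambda>x. ereal (f x))"
  obtains m where "0 < m" "\<And>x. x \<le> X \<Longrightarrow> m \<le> f x"
proof -
  obtain c where c: "0 < ereal c" "ereal c < Liminf at_bot (\<lambda>x. ereal (f x))"
    using ereal_dense2[OF liminf] by blast
  have "\<forall>\<^sub>F x in at_bot. ereal c < ereal (f x)" by (rule less_LiminfD[OF c(2)])
  then obtain N where N: "\<And>x. x \<le> N \<Longrightarrow> c < f x"
    unfolding eventually_at_bot_linorder by auto
  have "\<exists>xm\<in>{min N X..X}. \<forall>y\<in>{min N X..X}. f xm \<le> f y"
    by (rule continuous_attains_inf[OF compact_Icc _ continuous_on_subset[OF cont]]) auto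
  then obtain xm where xm: "\<And>y. y \<in> {min N X..X} \<Longrightarrow> f xm \<le> f y" by blast
  have "min c (f xm) \<le> f x" if "x \<le> X" for x
  proof (cases "x \<le> N")
    case True
    then show ?thesis using N[of x] by simp
  next
    case False
    then show ?thesis using xm[of x] that by simp
  qed
  moreover have "0 < min c (f xm)" using c(1) pos by simp
  ultimately show thesis using that by blast
qed

lemma level_set_le_threshold:
  fixes w f :: "real \<Rightarrow> real"
  assumes bound: "\<And>y. X \<le> y \<Longrightarrow> w y \<le> K * f y" and K: "0 \<le> K"
    and antimono: "\<And>x y. X < x \<Longrightarrow> x \<le> y \<Longrightarrow> f y \<le> f x"
    and left: "\<And>x. x \<le> X \<Longrightarrow> m \<le> f x"
    and z: "f z < m" "K * f z < \<omega>"
  shows "{x. w x = \<omega>} \<subseteq> {..z}"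
proof
  fix x assume "x \<in> {x. w x = \<omega>}"
  then have x: "w x = \<omega>" by simp
  have "X < z" using left[of z] z(1) by linarith
  show "x \<in> {..z}"
  proof (rule ccontr)
    assume "x \<notin> {..z}"
    then have "z < x" by simp
    then have "w x \<le> K * f z"
      using bound[of x] mult_left_mono[OF antimono[of z x] K] \<open>X < z\<close> by simp
    then show False using x z(2) by simp
  qed
qed

lemma level_sets_eventually_left_of_front:
  fixes u :: "real \<Rightarrow> real \<Rightarrow> real" and f \<zeta> :: "real \<Rightarrow> real"
  assumes tail: "\<And>x t. X \<le> x \<Longrightarrow> 0 \<le> t \<Longrightarrow> u x t \<le> C * exp (c * t) * f x" and C: "0 < C"
    and antimono: "\<And>x y. X < x \<Longrightarrow> x \<le> y \<Longrightarrow> f y \<le> f x"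
    and left: "\<And>x. x \<le> X \<Longrightarrow> m \<le> f x" and m: "0 < m"
    and front: "\<forall>\<^sub>F t in at_top. f (\<zeta> t) = \<gamma> * exp (- c' * t)"
    and rates: "0 < c'" "c < c'" and \<omega>: "0 < \<omega>"
  shows "\<exists>T1\<ge>0. \<forall>t\<ge>T1. {x. u x t = \<omega>} \<subseteq> {..\<zeta> t}"
proof -
  have "((\<lambda>t. \<gamma> * exp (- c' * t)) \<longlongrightarrow> 0) at_top"
    "((\<lambda>t. C * \<gamma> * exp ((c - c') * t)) \<longlongrightarrow> 0) at_top"
    using rates by real_asymp+
  then have "\<forall>\<^sub>F t in at_top. f (\<zeta> t) = \<gamma> * exp (- c' * t) \<and> \<gamma> * exp (- c' * t) < m
      \<and> C * \<gamma> * exp ((c - c') * t) < \<omega>"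
    using front m \<omega> by (intro eventually_conj order_tendstoD(2)[of _ 0]) auto
  then obtain T where T: "\<And>t. T \<le> t \<Longrightarrow> f (\<zeta> t) = \<gamma> * exp (- c' * t)
      \<and> \<gamma> * exp (- c' * t) < m \<and> C * \<gamma> * exp ((c - c') * t) < \<omega>"
    unfolding eventually_at_top_linorder by blast
  have "{x. u x t = \<omega>} \<subseteq> {..\<zeta> t}" if t: "max T 0 \<le> t" for t
  proof (rule level_set_le_threshold[where K="C * exp (c * t)" and X=X and m=m])
    show "u y t \<le> C * exp (c * t) * f y" if "X \<le> y" for y
      using tail[OF that] t by simp
    have f_\<zeta>: "f (\<zeta> t) = \<gamma> * exp (- c' * t)" using T[of t] t by simp
    have "C * exp (c * t) * f (\<zeta> t) = C * \<gamma> * (exp (c * t) * exp (- c' * t))"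
      unfolding f_\<zeta> by (simp only: mult_ac)
    also have "\<dots> = C * \<gamma> * exp ((c - c') * t)"
      by (simp only: mult_exp_exp) (simp add: algebra_simps)
    also have "\<dots> < \<omega>" using T[of t] t by simp
    finally show "C * exp (c * t) * f (\<zeta> t) < \<omega>" .
  qed (use T[of t] t C antimono left in auto)
  then show ?thesis by (intro exI[of _ "max T 0"]) auto
qed

theorem lemma3p1:
  fixes chi a b lam mu :: real and u0 :: "real \<Rightarrow> real"
    and u v :: "real \<Rightarrow> real \<Rightarrow> real"
  assumes pos: "chi > 0" "a > 0" "b > 0" "lam > 0" "mu > 0"
    and b_gt: "b > 2 * chi * mu"
    and u0_bdd: "bounded (range u0)"
    and u0_uc: "uniformly_continuous_on UNIV u0"
    and u0_pos: "\<forall>x. u0 x > 0"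
    and u0_left: "Liminf at_bot (\<lambda>x. ereal (u0 x)) > 0"
    and u0_right: "(u0 \<longlongrightarrow> 0) at_top"
    and u0_C2: "\<exists>\<xi>0 u0' u0''.
        (\<forall>x\<ge>\<xi>0. (u0 has_real_derivative u0' x) (at x within {\<xi>0..})
                 \<and> (u0' has_real_derivative u0'' x) (at x within {\<xi>0..})
                 \<and> u0' x \<le> 0)
        \<and> continuous_on {\<xi>0..} u0''
        \<and> ((\<lambda>x. u0'' x / u0 x) \<longlongrightarrow> 0) at_top"
    and sol: "classical_solution chi a b lam mu u0 u v"
    and eps: "\<epsilon> > 0" and gam: "\<gamma>1 > 0"
    and zeta: "\<forall>\<^sub>F t in at_top. u0 (\<zeta> t) = \<gamma>1 * exp (- (a + \<epsilon>) * t)"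
  shows "\<forall>\<omega>. 0 < \<omega> \<and> \<omega> < a / b \<longrightarrow>
           (\<exists>T1\<ge>0. \<forall>t\<ge>T1. {x. u x t = \<omega>} \<subseteq> {..\<zeta> t})"
proof -
  interpret chemotaxis_solution chi a b lam mu u0 u v
    using pos b_gt u0_bdd sol by unfold_locales (auto simp: mult_pos_pos)
  obtain \<xi>0 u0' u0'' where u0_derivs: "\<forall>x\<ge>\<xi>0. (u0 has_real_derivative u0' x) (at x within {\<xi>0..})
        \<and> (u0' has_real_derivative u0'' x) (at x within {\<xi>0..}) \<and> u0' x \<le> 0"
    and lim: "((\<lambda>x. u0'' x / u0 x) \<longlongrightarrow> 0) at_top"
    using u0_C2 by blast
  have u0': "(u0 has_real_derivative u0' x) (at x)" "(u0' has_real_derivative u0'' x) (at x)"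
    and dec: "u0' x \<le> 0" if "\<xi>0 < x" for x
    using u0_derivs[rule_format, of x] at_within_interior[of x "{\<xi>0..}"] that by auto
  obtain X C where X: "\<xi>0 < X" "0 < C"
    and tail: "\<And>x t. X \<le> x \<Longrightarrow> 0 \<le> t \<Longrightarrow> u x t \<le> C * exp ((a + \<epsilon> / 2) * t) * u0 x"
    using u_tail_bound[OF u0'(1) u0'(2) dec u0_pos[rule_format] lim half_gt_zero[OF eps]] by blast
  obtain m where m: "0 < m" "\<And>x. x \<le> X \<Longrightarrow> m \<le> u0 x"
    using Liminf_at_bot_pos_imp_bounded_below[OF uniformly_continuous_imp_continuous[OF u0_uc]]
      u0_pos u0_left by blast
  have antimono: "u0 y \<le> u0 x" if "X < x" "x \<le> y" for x y
    using deriv_nonpos_imp_antimono[OF u0'(1) dec] X(1) that by force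
  show ?thesis
    using level_sets_eventually_left_of_front[where u=u and f=u0 and c="a + \<epsilon> / 2"
          and c'="a + \<epsilon>", OF tail X(2) antimono m(2,1) zeta]
      pos eps by auto
qed

end
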